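(* There exist universal constants $\delta_0 > 0$ and $c > 0$ such that if $\Omega \subset \mathbb{R}^2$ is convex, has area $1$ and satisfies $\mathcal{A}(\Omega) \leq \delta_0$, then $\Omega \subset B$ for some disk $B$ with $$ |B| \leq 1 + c \cdot \mathcal{A}(\Omega)^{1/2}.$$
   Context: The Fraenkel asymmetry of $\Omega$ is $\mathcal{A}(\Omega) = \inf_{B} |B \,\Delta\, \Omega| / |\Omega|$, where the infimum is over all disks $B \subset \mathbb{R}^2$ with $|B| = |\Omega|$ and $B \,\Delta\, \Omega = (B\setminus\Omega)\cup(\Omega\setminus B)$ is the symmetric difference. *)

theory Defs
  imports "HOL-Analysis.Analysis"
begin

text \<open>Disks in the plane (closed; open and closed disks have the same area).\<close>
definition disks :: "(real^2) set set" where
  "disks = {cball x r | x r. r > 0}"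

definition fraenkel_asymmetry :: "(real^2) set \<Rightarrow> real" where
  "fraenkel_asymmetry \<Omega> =
     (INF B \<in> {B \<in> disks. measure lebesgue B = measure lebesgue \<Omega>}.
        measure lebesgue ((B - \<Omega>) \<union> (\<Omega> - B)) / measure lebesgue \<Omega>)"

end

theory Submission
  imports Defs
begin

(* Let r be the radius of the disks of area 1 and suppose |cball x r \<Delta> \<Omega>| \<le> d.
   If p \<in> \<Omega> lies at distance r + t from x, then by convexity the homothety with centre p
   and ratio l = t / (2r + t) maps \<Omega> \<inter> cball x r into \<Omega> - ball x r.  Comparing areas,
   l^2 (1 - d/2) \<le> d/2, so l \<le> sqrt d and t \<le> 4 r sqrt d.  Such disks exist for every
   d > A(\<Omega>); letting d decrease to A(\<Omega>), a limit of their centres x satisfies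
   \<Omega> \<subseteq> cball x (r (1 + 4 sqrt A(\<Omega>))), a disk of area (1 + 4 sqrt A(\<Omega>))^2 \<le> 1 + 16 sqrt A(\<Omega>). *)

lemma measure_Diff_eq_half_sym_diff:
  assumes A: "A \<in> fmeasurable M" and B: "B \<in> fmeasurable M"
    and eq: "measure M A = measure M B"
  shows "measure M (A - B) = measure M (sym_diff B A) / 2"
proof -
  have "measure M (A - B) = measure M (B - A)"
    using measure_Un2[OF A B] measure_Un2[OF B A] eq by (simp add: Un_commute)
  moreover have "measure M (sym_diff B A) = measure M (B - A) + measure M (A - B)"
    using A B by (intro measure_Un_AE) (auto intro: fmeasurable.Diff)
  ultimately show ?thesis by simp
qed

lemma measure_nonzero_imp_fmeasurable:
  assumes "A \<in> sets M" and "measure M A \<noteq> 0"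
  shows "A \<in> fmeasurable M"
  using assms by (metis fmeasurableI infinity_ennreal_def less_top measure_zero_top)

lemma subset_cball_of_tendsto_radius:
  fixes S :: "'a::heine_borel set"
  assumes "S \<noteq> {}" and lim: "f \<longlonglongrightarrow> R" and encl: "\<And>n. S \<subseteq> cball (y n) (f n)"
  shows "\<exists>x. S \<subseteq> cball x R"
proof -
  obtain p0 where p0: "p0 \<in> S" using assms(1) by auto
  obtain K where K: "\<And>n. norm (f n) \<le> K"
    using convergent_imp_bounded[OF lim] by (auto simp: bounded_iff)
  have "dist p0 (y n) \<le> K" for n
    using encl[of n] p0 K[of n] by (force simp: dist_commute)
  then have "bounded (range y)" by (auto simp: bounded_any_center[of _ p0])
  then obtain x \<sigma> where \<sigma>: "strict_mono \<sigma>" and y_lim: "(y \<circ> \<sigma>) \<longlonglongrightarrow> x"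
    using bounded_imp_convergent_subsequence by blast
  have "dist x p \<le> R" if "p \<in> S" for p
  proof (rule LIMSEQ_le)
    show "(\<lambda>n. dist ((y \<circ> \<sigma>) n) p) \<longlonglongrightarrow> dist x p" by (intro tendsto_intros y_lim)
    show "(f \<circ> \<sigma>) \<longlonglongrightarrow> R" using LIMSEQ_subseq_LIMSEQ[OF lim \<sigma>] .
    show "\<exists>N. \<forall>n\<ge>N. dist ((y \<circ> \<sigma>) n) p \<le> (f \<circ> \<sigma>) n" using encl that by fastforce
  qed
  then have "S \<subseteq> cball x R" by auto
  then show ?thesis ..
qed

lemma homothety_image_cball_subset_outside_ball:
  fixes \<Omega> :: "'a::real_normed_vector set"
  assumes "convex \<Omega>" and p: "p \<in> \<Omega>" and "0 < \<rho>" and far: "\<rho> < dist x p"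
  defines "l \<equiv> (dist x p - \<rho>) / (dist x p + \<rho>)"
    \<comment> \<open>the largest ratio for which the image of cball x \<rho> stays outside ball x \<rho>\<close>
  shows "(\<lambda>q. l *\<^sub>R q + (1 - l) *\<^sub>R p) ` (\<Omega> \<inter> cball x \<rho>) \<subseteq> \<Omega> - ball x \<rho>"
proof (rule image_subsetI)
  fix q assume "q \<in> \<Omega> \<inter> cball x \<rho>"
  then have q: "q \<in> \<Omega>" "dist x q \<le> \<rho>" by auto
  let ?y = "l *\<^sub>R q + (1 - l) *\<^sub>R p"
  have l: "0 < l" "l < 1" using far \<open>0 < \<rho>\<close> by (auto simp: l_def divide_simps)
  have "?y \<in> \<Omega>" using \<open>convex \<Omega>\<close> q p l by (simp add: convex_def)
  have "\<rho> = (1 - l) * dist x p - l * \<rho>"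
    using far \<open>0 < \<rho>\<close> by (simp add: l_def divide_simps) (simp add: algebra_simps)
  also have "\<dots> \<le> norm ((1 - l) *\<^sub>R (p - x)) - norm (l *\<^sub>R (q - x))"
    using l q(2) by (simp add: dist_norm norm_minus_commute mult_left_mono)
  also have "\<dots> \<le> norm (?y - x)"
  proof -
    have "(1 - l) *\<^sub>R (p - x) = (?y - x) - l *\<^sub>R (q - x)" by (simp add: algebra_simps)
    then show ?thesis by (metis norm_triangle_ineq4 diff_le_eq)
  qed
  finally show "?y \<in> \<Omega> - ball x \<rho>"
    using \<open>?y \<in> \<Omega>\<close> by (simp add: dist_norm norm_minus_commute)
qed

lemma measure_Diff_ball_ge_scaled_measure_Int_cball:
  fixes \<Omega> :: "'a::euclidean_space set"
  assumes "convex \<Omega>" and \<Omega>: "\<Omega> \<in> lmeasurable" and "p \<in> \<Omega>" and "0 < \<rho>" and "\<rho> < dist x p"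
  shows "((dist x p - \<rho>) / (dist x p + \<rho>)) ^ DIM('a) * measure lebesgue (\<Omega> \<inter> cball x \<rho>)
           \<le> measure lebesgue (\<Omega> - ball x \<rho>)"
proof -
  define l where "l = (dist x p - \<rho>) / (dist x p + \<rho>)"
  define S where "S = (\<lambda>q. l *\<^sub>R q + (1 - l) *\<^sub>R p) ` (\<Omega> \<inter> cball x \<rho>)"
  have "l > 0" using assms by (simp add: l_def)
  have "S = (+) ((1 - l) *\<^sub>R p) ` ((\<lambda>q. l *\<^sub>R q) ` (\<Omega> \<inter> cball x \<rho>))"
    unfolding S_def image_image by (simp add: add.commute)
  then have "S \<in> lmeasurable"
    using \<open>convex \<Omega>\<close>
    by (auto intro!: measurable_convex convex_translation convex_scaling convex_Int
        bounded_translation bounded_scaling bounded_Int)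
  have "l ^ DIM('a) * measure lebesgue (\<Omega> \<inter> cball x \<rho>) = measure lebesgue S"
    using measure_lebesgue_affine[of l "(1 - l) *\<^sub>R p" "\<Omega> \<inter> cball x \<rho>"] \<open>l > 0\<close>
    by (simp add: S_def)
  also have "\<dots> \<le> measure lebesgue (\<Omega> - ball x \<rho>)"
    using homothety_image_cball_subset_outside_ball[OF assms(1,3-5)] \<open>S \<in> lmeasurable\<close> \<Omega>
    by (intro measure_mono_fmeasurable) (auto simp: S_def l_def)
  finally show ?thesis by (simp add: l_def)
qed

lemma measure_bounds_of_sym_diff_cball_le:
  fixes \<Omega> :: "'a::euclidean_space set"
  assumes \<Omega>: "\<Omega> \<in> lmeasurable" and eq: "measure lebesgue \<Omega> = measure lebesgue (cball x \<rho>)"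
    and sym_diff_le: "measure lebesgue (sym_diff (cball x \<rho>) \<Omega>) \<le> d"
  shows "measure lebesgue (\<Omega> - ball x \<rho>) \<le> d / 2"
    and "measure lebesgue \<Omega> - d / 2 \<le> measure lebesgue (\<Omega> \<inter> cball x \<rho>)"
proof -
  have "measure lebesgue (\<Omega> - cball x \<rho>) = measure lebesgue (sym_diff (cball x \<rho>) \<Omega>) / 2"
    using \<Omega> eq by (intro measure_Diff_eq_half_sym_diff) auto
  with sym_diff_le have outside: "measure lebesgue (\<Omega> - cball x \<rho>) \<le> d / 2" by simp
  have "measure lebesgue (\<Omega> - ball x \<rho>) = measure lebesgue (\<Omega> - cball x \<rho>)"
    using \<Omega> by (intro measure_negligible_symdiff negligible_subset[OF negligible_sphere[of x \<rho>]])
      auto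
  with outside show "measure lebesgue (\<Omega> - ball x \<rho>) \<le> d / 2" by simp
  have "\<Omega> \<inter> cball x \<rho> \<in> sets lebesgue" using \<Omega> by (intro sets.Int fmeasurableD) auto
  then have "measure lebesgue (\<Omega> - cball x \<rho>)
               = measure lebesgue \<Omega> - measure lebesgue (\<Omega> \<inter> cball x \<rho>)"
    using measurable_measure_Diff[of \<Omega> lebesgue "\<Omega> \<inter> cball x \<rho>"] \<Omega> by (simp add: Diff_Int)
  with outside show "measure lebesgue \<Omega> - d / 2 \<le> measure lebesgue (\<Omega> \<inter> cball x \<rho>)" by simp
qed

lemma dist_le_of_homothety_ratio_le:
  fixes D \<rho> s :: real
  assumes "0 < \<rho>" and "\<rho> < D" and ratio: "(D - \<rho>) / (D + \<rho>) \<le> s" and "s \<le> 1/2"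
  shows "D \<le> \<rho> * (1 + 4 * s)"
proof -
  have "D - \<rho> \<le> s * (D + \<rho>)" using ratio assms(1,2) by (simp add: divide_le_eq)
  also have "\<dots> = s * (D - \<rho>) + 2 * (s * \<rho>)" by (simp add: algebra_simps)
  also have "\<dots> \<le> (D - \<rho>) / 2 + 2 * (s * \<rho>)"
    using \<open>s \<le> 1/2\<close> \<open>\<rho> < D\<close> by (simp add: mult_right_mono)
  finally have "D \<le> \<rho> + 4 * (s * \<rho>)" by argo
  then show ?thesis by (simp add: algebra_simps)
qed

lemma measure_cball_real2:
  fixes x :: "real^2"
  assumes "0 \<le> \<rho>"
  shows "measure lebesgue (cball x \<rho>) = pi * \<rho>\<^sup>2"
  using assms by (simp add: content_cball unit_ball_vol_numeral)

lemma convex_subset_cball_of_small_sym_diff: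
  fixes \<Omega> :: "(real^2) set"
  assumes "convex \<Omega>" and \<Omega>: "\<Omega> \<in> lmeasurable" "measure lebesgue \<Omega> = 1"
    and \<rho>: "0 < \<rho>" "pi * \<rho>\<^sup>2 = 1"
    and sym_diff_le: "measure lebesgue (sym_diff (cball x \<rho>) \<Omega>) \<le> d" and "d \<le> 1/4"
  shows "\<Omega> \<subseteq> cball x (\<rho> * (1 + 4 * sqrt d))"
proof
  have "measure lebesgue \<Omega> = measure lebesgue (cball x \<rho>)"
    using \<Omega>(2) \<rho> measure_cball_real2[of \<rho> x] by simp
  from measure_bounds_of_sym_diff_cball_le[OF \<Omega>(1) this sym_diff_le] \<Omega>(2)
  have outside: "measure lebesgue (\<Omega> - ball x \<rho>) \<le> d / 2"
    and inside: "1 - d / 2 \<le> measure lebesgue (\<Omega> \<inter> cball x \<rho>)" by simp_all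
  have "0 \<le> d" using outside measure_nonneg[of lebesgue "\<Omega> - ball x \<rho>"] by linarith
  have "sqrt d \<le> 1/2" using \<open>d \<le> 1/4\<close> by (intro real_le_lsqrt) (auto simp: power2_eq_square)
  fix p assume "p \<in> \<Omega>"
  show "p \<in> cball x (\<rho> * (1 + 4 * sqrt d))"
  proof (cases "dist x p \<le> \<rho>")
    case True
    moreover have "\<rho> \<le> \<rho> * (1 + 4 * sqrt d)" using \<rho>(1) \<open>0 \<le> d\<close> by simp
    ultimately show ?thesis by simp
  next
    case False
    define l where "l = (dist x p - \<rho>) / (dist x p + \<rho>)"
    have "l\<^sup>2 * (1 - d / 2) \<le> l\<^sup>2 * measure lebesgue (\<Omega> \<inter> cball x \<rho>)"
      using inside by (simp add: mult_left_mono)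
    also have "\<dots> \<le> measure lebesgue (\<Omega> - ball x \<rho>)"
      using measure_Diff_ball_ge_scaled_measure_Int_cball[OF \<open>convex \<Omega>\<close> \<Omega>(1) \<open>p \<in> \<Omega>\<close> \<rho>(1)] False
      by (simp add: l_def)
    finally have "l\<^sup>2 * (2 - d) \<le> d" using outside by (simp add: algebra_simps)
    moreover have "l\<^sup>2 * 1 \<le> l\<^sup>2 * (2 - d)" using \<open>d \<le> 1/4\<close> by (intro mult_left_mono) auto
    ultimately have "l \<le> sqrt d" by (intro real_le_rsqrt) simp
    then have "dist x p \<le> \<rho> * (1 + 4 * sqrt d)"
      using dist_le_of_homothety_ratio_le \<rho>(1) False \<open>sqrt d \<le> 1/2\<close> by (simp add: l_def)
    then show ?thesis by simp
  qed
qed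

lemma cball_in_equal_area_disks:
  assumes "0 < measure lebesgue \<Omega>"
  shows "cball x (sqrt (measure lebesgue \<Omega> / pi)) \<in> {B \<in> disks. measure lebesgue B = measure lebesgue \<Omega>}"
proof -
  let ?\<rho> = "sqrt (measure lebesgue \<Omega> / pi)"
  have "0 < ?\<rho>" using assms by simp
  then have "cball x ?\<rho> \<in> disks" unfolding disks_def by blast
  moreover have "measure lebesgue (cball x ?\<rho>) = measure lebesgue \<Omega>"
    using measure_cball_real2[of ?\<rho> x] assms by simp
  ultimately show ?thesis by simp
qed

lemma fraenkel_asymmetry_nonneg:
  assumes "0 < measure lebesgue \<Omega>"
  shows "0 \<le> fraenkel_asymmetry \<Omega>"
proof -
  have "{B \<in> disks. measure lebesgue B = measure lebesgue \<Omega>} \<noteq> {}"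
    using cball_in_equal_area_disks[OF assms] by blast
  then show ?thesis unfolding fraenkel_asymmetry_def by (intro cINF_greatest) auto
qed

lemma fraenkel_asymmetry_less_imp_ex_cball:
  assumes m: "0 < measure lebesgue \<Omega>" and "fraenkel_asymmetry \<Omega> < e"
  shows "\<exists>x. measure lebesgue (sym_diff (cball x (sqrt (measure lebesgue \<Omega> / pi))) \<Omega>)
               < e * measure lebesgue \<Omega>"
proof -
  let ?X = "{B \<in> disks. measure lebesgue B = measure lebesgue \<Omega>}"
  let ?f = "\<lambda>B. measure lebesgue (sym_diff B \<Omega>) / measure lebesgue \<Omega>"
  have ne: "?X \<noteq> {}" using cball_in_equal_area_disks[OF m] by blast
  have bdd: "bdd_below (?f ` ?X)" by (rule bdd_belowI2[of _ 0]) simp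
  have "(INF B\<in>?X. ?f B) < e" using assms(2) unfolding fraenkel_asymmetry_def .
  then obtain B where B: "B \<in> ?X" and "?f B < e" using cINF_less_iff[OF ne bdd] by blast
  then have less: "measure lebesgue (sym_diff B \<Omega>) < e * measure lebesgue \<Omega>"
    using m by (simp add: divide_less_eq)
  from B obtain x \<rho> where B_eq: "B = cball x \<rho>" and "0 < \<rho>" by (auto simp: disks_def)
  then have "pi * \<rho>\<^sup>2 = measure lebesgue \<Omega>" using B measure_cball_real2[of \<rho> x] by simp
  then have "\<rho>\<^sup>2 = measure lebesgue \<Omega> / pi" by (simp add: field_simps)
  then have "sqrt (measure lebesgue \<Omega> / pi) = \<rho>" using \<open>0 < \<rho>\<close> by (intro real_sqrt_unique) auto
  then show ?thesis using B_eq less by blast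
qed

lemma convex_subset_cball_of_small_fraenkel_asymmetry:
  fixes \<Omega> :: "(real^2) set"
  assumes "convex \<Omega>" and \<Omega>: "\<Omega> \<in> lmeasurable" "measure lebesgue \<Omega> = 1"
    and small: "fraenkel_asymmetry \<Omega> < 1/4"
  shows "\<exists>x. \<Omega> \<subseteq> cball x (sqrt (1 / pi) * (1 + 4 * sqrt (fraenkel_asymmetry \<Omega>)))"
proof -
  define A where "A = fraenkel_asymmetry \<Omega>"
  define r where "r = sqrt (1 / pi)"
  define d where "d n = A + (1/4 - A) * inverse (real (Suc n))" for n
    \<comment> \<open>the infimum defining A need not be attained, hence the limit over d n \<down> A\<close>
  have r: "0 < r" "pi * r\<^sup>2 = 1" by (simp_all add: r_def)
  have "\<exists>y. \<Omega> \<subseteq> cball y (r * (1 + 4 * sqrt (d n)))" for n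
  proof -
    have "A < d n" using small by (simp add: A_def d_def)
    then obtain y where "measure lebesgue (sym_diff (cball y r) \<Omega>) < d n"
      using fraenkel_asymmetry_less_imp_ex_cball[of \<Omega> "d n"] \<Omega>(2) by (auto simp: A_def r_def)
    moreover have "d n \<le> 1/4"
    proof -
      have "(1/4 - A) * inverse (real (Suc n)) \<le> (1/4 - A) * 1"
        using small by (intro mult_left_mono) (auto simp: A_def inverse_le_1_iff)
      then show ?thesis by (simp add: d_def)
    qed
    ultimately show ?thesis
      using convex_subset_cball_of_small_sym_diff[OF \<open>convex \<Omega>\<close> \<Omega> r] by (meson less_imp_le)
  qed
  then obtain y where "\<And>n. \<Omega> \<subseteq> cball (y n) (r * (1 + 4 * sqrt (d n)))" by metis
  moreover have "d \<longlonglongrightarrow> A + (1/4 - A) * 0"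
    unfolding d_def by (intro tendsto_intros LIMSEQ_inverse_real_of_nat)
  then have "(\<lambda>n. r * (1 + 4 * sqrt (d n))) \<longlonglongrightarrow> r * (1 + 4 * sqrt A)"
    by (auto intro!: tendsto_intros)
  moreover have "\<Omega> \<noteq> {}" using \<Omega>(2) by auto
  ultimately show ?thesis
    using subset_cball_of_tendsto_radius unfolding A_def r_def by blast
qed

theorem lemma4:
  shows "\<exists>\<delta>0 c. \<delta>0 > 0 \<and> c > 0 \<and>
    (\<forall>\<Omega> :: (real^2) set. convex \<Omega> \<and> \<Omega> \<in> sets lebesgue \<and> measure lebesgue \<Omega> = 1
       \<and> fraenkel_asymmetry \<Omega> \<le> \<delta>0 \<longrightarrow>
       (\<exists>B \<in> disks. \<Omega> \<subseteq> B \<and> measure lebesgue B \<le> 1 + c * sqrt (fraenkel_asymmetry \<Omega>)))"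
proof (intro exI conjI allI impI)
  show "(1/8::real) > 0" "(16::real) > 0" by auto
  fix \<Omega> :: "(real^2) set"
  assume "convex \<Omega> \<and> \<Omega> \<in> sets lebesgue \<and> measure lebesgue \<Omega> = 1 \<and> fraenkel_asymmetry \<Omega> \<le> 1/8"
  then have "convex \<Omega>" and \<Omega>: "\<Omega> \<in> lmeasurable" "measure lebesgue \<Omega> = 1"
    and small: "fraenkel_asymmetry \<Omega> \<le> 1/8"
    by (auto intro: measure_nonzero_imp_fmeasurable)
  define u where "u = sqrt (fraenkel_asymmetry \<Omega>)"
  define R where "R = sqrt (1 / pi) * (1 + 4 * u)"
  obtain x where sub: "\<Omega> \<subseteq> cball x R"
    using convex_subset_cball_of_small_fraenkel_asymmetry[OF \<open>convex \<Omega>\<close> \<Omega>] small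
    unfolding R_def u_def by force
  have "0 \<le> u" using fraenkel_asymmetry_nonneg[of \<Omega>] \<Omega>(2) by (simp add: u_def)
  have "u \<le> 1/2" using small unfolding u_def by (intro real_le_lsqrt) (auto simp: power2_eq_square)
  have "measure lebesgue (cball x R) = (1 + 4 * u)\<^sup>2"
    using measure_cball_real2[of R x] \<open>0 \<le> u\<close> by (simp add: R_def power_mult_distrib)
  also have "\<dots> \<le> 1 + 16 * u"
    using mult_left_mono[OF \<open>u \<le> 1/2\<close> \<open>0 \<le> u\<close>] by (simp add: power2_eq_square algebra_simps)
  finally have "measure lebesgue (cball x R) \<le> 1 + 16 * u" .
  moreover have "0 < R" using \<open>0 \<le> u\<close> by (simp add: R_def add_nonneg_pos)
  then have "cball x R \<in> disks" unfolding disks_def by blast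
  ultimately show "\<exists>B \<in> disks. \<Omega> \<subseteq> B \<and> measure lebesgue B \<le> 1 + 16 * sqrt (fraenkel_asymmetry \<Omega>)"
    using sub unfolding u_def by blast
qed

end
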